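(* Let $H$ be a uniquely vector colorable graph whose unique optimal vector coloring $i\mapsto p_i$ is injective. Then any connected graph $G$ with $H\subseteq G\subseteq H'(p)$ (all on vertex set $V(H)$) is a core.
   Context: A vector $t$-coloring of a graph ($t\ge2$) assigns unit vectors $p_i\in\mathbb{R}^d$ to vertices with $\langle p_i,p_j\rangle\le-1/(t-1)$ for all edges $ij$; $\chi_v$ is the least such $t$, and optimal means $t=\chi_v$. A graph is uniquely vector colorable if any two of its optimal vector colorings have the same Gram matrix. $H'(p)$ is the graph on $V(H)$ in which distinct $u,v$ are adjacent iff $\langle p_u,p_v\rangle\le-1/(\chi_v(H)-1)$. A graph $G$ is a core if every homomorphism (adjacency-preserving map) $G\to G$ is an automorphism. *)

theory Defs
  imports Complex_Main
begin

definition is_graph :: "('a \<Rightarrow> 'a \<Rightarrow> bool) \<Rightarrow> bool" where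
  "is_graph E \<longleftrightarrow> (\<forall>u v. E u v \<longrightarrow> E v u) \<and> (\<forall>u. \<not> E u u)"

definition connected_graph :: "('a \<Rightarrow> 'a \<Rightarrow> bool) \<Rightarrow> bool" where
  "connected_graph E \<longleftrightarrow> (\<forall>u v. E\<^sup>*\<^sup>* u v)"

definition graph_hom :: "('a \<Rightarrow> 'a \<Rightarrow> bool) \<Rightarrow> ('b \<Rightarrow> 'b \<Rightarrow> bool) \<Rightarrow> ('a \<Rightarrow> 'b) \<Rightarrow> bool" where
  "graph_hom G H f \<longleftrightarrow> (\<forall>u v. G u v \<longrightarrow> H (f u) (f v))"

definition graph_aut :: "('a \<Rightarrow> 'a \<Rightarrow> bool) \<Rightarrow> ('a \<Rightarrow> 'a) \<Rightarrow> bool" where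
  "graph_aut G f \<longleftrightarrow> bij f \<and> (\<forall>u v. G u v \<longleftrightarrow> G (f u) (f v))"

definition is_core :: "('a \<Rightarrow> 'a \<Rightarrow> bool) \<Rightarrow> bool" where
  "is_core G \<longleftrightarrow> (\<forall>f. graph_hom G G f \<longrightarrow> graph_aut G f)"

text \<open>Vectors of R^d are represented as functions nat => real vanishing at indices >= d.\<close>
definition ip :: "nat \<Rightarrow> (nat \<Rightarrow> real) \<Rightarrow> (nat \<Rightarrow> real) \<Rightarrow> real" where
  "ip d x y = (\<Sum>i<d. x i * y i)"

definition vec_coloring ::
  "('a \<Rightarrow> 'a \<Rightarrow> bool) \<Rightarrow> real \<Rightarrow> nat \<Rightarrow> ('a \<Rightarrow> nat \<Rightarrow> real) \<Rightarrow> bool" where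
  "vec_coloring E t d p \<longleftrightarrow> t \<ge> 2 \<and>
     (\<forall>v i. d \<le> i \<longrightarrow> p v i = 0) \<and>
     (\<forall>v. ip d (p v) (p v) = 1) \<and>
     (\<forall>u v. E u v \<longrightarrow> ip d (p u) (p v) \<le> - 1 / (t - 1))"

definition vec_chrom :: "('a \<Rightarrow> 'a \<Rightarrow> bool) \<Rightarrow> real" where
  "vec_chrom E = Inf {t. \<exists>d p. vec_coloring E t d p}"

definition optimal_vec_coloring :: "('a \<Rightarrow> 'a \<Rightarrow> bool) \<Rightarrow> nat \<Rightarrow> ('a \<Rightarrow> nat \<Rightarrow> real) \<Rightarrow> bool" where
  "optimal_vec_coloring E d p \<longleftrightarrow> vec_coloring E (vec_chrom E) d p"

definition uniquely_vector_colorable :: "('a \<Rightarrow> 'a \<Rightarrow> bool) \<Rightarrow> bool" where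
  "uniquely_vector_colorable E \<longleftrightarrow>
     (\<forall>d p d' q. optimal_vec_coloring E d p \<longrightarrow> optimal_vec_coloring E d' q \<longrightarrow>
        (\<forall>u v. ip d (p u) (p v) = ip d' (q u) (q v)))"

definition H_prime :: "('a \<Rightarrow> 'a \<Rightarrow> bool) \<Rightarrow> nat \<Rightarrow> ('a \<Rightarrow> nat \<Rightarrow> real) \<Rightarrow> 'a \<Rightarrow> 'a \<Rightarrow> bool" where
  "H_prime H d p u v \<longleftrightarrow> u \<noteq> v \<and> ip d (p u) (p v) \<le> - 1 / (vec_chrom H - 1)"

end

theory Submission
  imports Defs
begin

text \<open>A graph homomorphism f from G to itself pulls the unique optimal vector coloring p
  of H back to p \<circ> f, which is again an optimal vector coloring of H because G lies inside
  H'(p). Uniqueness forces p \<circ> f to have the Gram matrix of p, so f preserves the inner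
  products of the p-vectors; as distinct vertices carry distinct unit vectors, f is injective,
  and an injective endomorphism of a finite graph is an automorphism.\<close>

lemma ip_diff_self:
  "ip d (\<lambda>i. x i - y i) (\<lambda>i. x i - y i) = ip d x x - 2 * ip d x y + ip d y y"
proof -
  have "ip d (\<lambda>i. x i - y i) (\<lambda>i. x i - y i)
      = (\<Sum>i<d. x i * x i - 2 * (x i * y i) + y i * y i)"
    unfolding ip_def by (rule sum.cong) (auto simp: algebra_simps)
  also have "\<dots> = ip d x x - 2 * ip d x y + ip d y y"
    by (simp add: ip_def sum.distrib sum_subtractf sum_distrib_left)
  finally show ?thesis .
qed

lemma unit_vectors_eq_if_ip_one:
  assumes "ip d x x = 1" "ip d y y = 1" "ip d x y = 1"
    and "\<forall>i. d \<le> i \<longrightarrow> x i = 0" "\<forall>i. d \<le> i \<longrightarrow> y i = 0"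
  shows "x = y"
proof
  fix i
  have "(\<Sum>j<d. (x j - y j)\<^sup>2) = 0"
    using ip_diff_self[of d x y] assms(1-3) by (simp add: ip_def power2_eq_square)
  then have "\<forall>j<d. x j = y j"
    by (simp add: sum_nonneg_eq_0_iff)
  then show "x i = y i"
    using assms(4,5) by (cases "i < d") auto
qed

lemma optimal_vec_coloring_comp_hom:
  assumes "optimal_vec_coloring H d p"
    and "graph_hom H G f"
    and "\<forall>u v. G u v \<longrightarrow> H_prime H d p u v"
  shows "optimal_vec_coloring H d (p \<circ> f)"
  using assms unfolding optimal_vec_coloring_def vec_coloring_def graph_hom_def H_prime_def
  by simp

lemma inj_if_preserves_ip:
  assumes "vec_coloring E t d p" and "inj p"
    and "\<And>u v. ip d (p (f u)) (p (f v)) = ip d (p u) (p v)"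
  shows "inj f"
proof (rule injI)
  fix u v assume "f u = f v"
  then have "ip d (p u) (p v) = 1"
    using assms(1) assms(3)[of u v] unfolding vec_coloring_def by simp
  then have "p u = p v"
    using assms(1) unfolding vec_coloring_def by (auto intro: unit_vectors_eq_if_ip_one)
  then show "u = v"
    using assms(2) by (simp add: inj_eq)
qed

lemma graph_aut_if_inj_hom:
  fixes G :: "'a::finite \<Rightarrow> 'a \<Rightarrow> bool"
  assumes "graph_hom G G f" and "inj f"
  shows "graph_aut G f"
proof -
  define S where "S = {(u, v). G u v}"
  define g where "g = map_prod f f"
  have inj_g: "inj_on g S"
    using assms(2) unfolding g_def by (intro inj_on_subset[OF map_prod_inj_on]) auto
  have "g ` S \<subseteq> S"
    using assms(1) unfolding g_def S_def graph_hom_def by auto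
  \<comment> \<open>an injective self-map of the finite edge set is onto\<close>
  then have edges_onto: "g ` S = S"
    using card_image[OF inj_g] by (intro card_subset_eq) auto
  have "G u v" if "G (f u) (f v)" for u v
  proof -
    have "(f u, f v) \<in> g ` S"
      using that edges_onto by (simp add: S_def)
    then obtain a b where "G a b" "f a = f u" "f b = f v"
      unfolding g_def S_def by auto
    then show "G u v"
      using assms(2) by (simp add: inj_eq)
  qed
  moreover have "bij f"
    using assms(2) by (simp add: bij_def finite_UNIV_inj_surj)
  ultimately show ?thesis
    using assms(1) unfolding graph_aut_def graph_hom_def by blast
qed

theorem theorem4p7:
  fixes H G :: "'a::finite \<Rightarrow> 'a \<Rightarrow> bool"
    and d :: nat and p :: "'a \<Rightarrow> nat \<Rightarrow> real"
  assumes "is_graph H"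
    and "uniquely_vector_colorable H"
    and "optimal_vec_coloring H d p"
    and "inj p"
    and "is_graph G"
    and "connected_graph G"
    and "\<forall>u v. H u v \<longrightarrow> G u v"
    and "\<forall>u v. G u v \<longrightarrow> H_prime H d p u v"
  shows "is_core G"
  unfolding is_core_def
proof (intro allI impI)
  fix f assume hom: "graph_hom G G f"
  then have "graph_hom H G f"
    using assms(7) by (simp add: graph_hom_def)
  then have "optimal_vec_coloring H d (p \<circ> f)"
    using assms(3,8) by (auto intro: optimal_vec_coloring_comp_hom)
  then have "ip d (p (f u)) (p (f v)) = ip d (p u) (p v)" for u v
    using assms(2,3) unfolding uniquely_vector_colorable_def by (metis comp_apply)
  moreover have "vec_coloring H (vec_chrom H) d p"
    using assms(3) by (simp add: optimal_vec_coloring_def)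
  ultimately have "inj f"
    using assms(4) by (intro inj_if_preserves_ip)
  with hom show "graph_aut G f"
    by (rule graph_aut_if_inj_hom)
qed

end
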